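(* Let $q$ be a prime power, $1\le k\le n\le m$, let $g_1,\dots,g_n\in\mathbb{F}_{q^m}$ be linearly independent over $\mathbb{F}_q$, and let $\mathcal{G}$ be the Gabidulin code of dimension $k$ with respect to $g_1,\dots,g_n$. Let $f\in\mathcal{L}_q(x,\mathbb{F}_{q^m})$ with $k\le\deg_q(f)<n$ and let $\sigma_f=(f(g_1),\dots,f(g_n))$. Then $$d_R(\sigma_f,\mathcal{G})\ge n-\deg_q(f).$$ Moreover, if $f$ is monic, then $d_R(\sigma_f,\mathcal{G})=n-\deg_q(f)$ if and only if there exist an $\mathbb{F}_q$-subspace $H\subseteq\langle g_1,\dots,g_n\rangle$ of dimension $\deg_q(f)$ and $v\in\mathcal{L}_q(x,\mathbb{F}_{q^m})$ with $v=0$ or $\deg_q(v)\le k-1$ such that $$f(x)-v(x)=\prod_{h\in H}(x-h).$$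
   Context: A $q$-linearized polynomial over $\mathbb{F}_{q^m}$ is a polynomial $L(x)=\sum_{i=0}^{d}a_ix^{q^i}$ with $a_i\in\mathbb{F}_{q^m}$; if $a_d\ne0$, $d$ is its $q$-degree $\deg_q(L)$; $L$ is monic if $a_d=1$. $\mathcal{L}_q(x,\mathbb{F}_{q^m})$ is the set of these. Rank weight: fix a basis of $\mathbb{F}_{q^m}$ over $\mathbb{F}_q$; for $\mathbf{u}=(u_1,\dots,u_n)\in\mathbb{F}_{q^m}^n$, $w_R(\mathbf{u})$ is the rank of the $m\times n$ matrix over $\mathbb{F}_q$ whose $j$-th column is the coordinate vector of $u_j$ (equivalently $\dim_{\mathbb{F}_q}\langle u_1,\dots,u_n\rangle$). $d_R(\mathbf{u},\mathbf{v})=w_R(\mathbf{u}-\mathbf{v})$ and $d_R(\mathbf{u},C)=\min_{\mathbf{c}\in C}d_R(\mathbf{u},\mathbf{c})$. The Gabidulin code of dimension $k$ with respect to $\mathbb{F}_q$-linearly independent $g_1,\dots,g_n\in\mathbb{F}_{q^m}$ is $\mathcal{G}=\{(v(g_1),\dots,v(g_n)) : v\in\mathcal{L}_q(x,\mathbb{F}_{q^m}),\ v=0\text{ or }\deg_q(v)<k\}\subseteq\mathbb{F}_{q^m}^n$. *)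

theory Defs
  imports "HOL-Computational_Algebra.Computational_Algebra"
begin

(* The ambient field F_{q^m} is a finite field type 'a with CARD('a) = q^m.
   The subfield F_q is the set of roots of x^q - x. *)
definition Fq :: "nat \<Rightarrow> 'a::{field,finite} set" where
  "Fq q = {x. x ^ q = x}"

definition Fq_lin_indep_list :: "nat \<Rightarrow> 'a::{field,finite} list \<Rightarrow> bool" where
  "Fq_lin_indep_list q g \<longleftrightarrow>
     (\<forall>c::nat \<Rightarrow> 'a. (\<forall>i<length g. c i \<in> Fq q) \<longrightarrow>
        (\<Sum>i<length g. c i * g ! i) = 0 \<longrightarrow> (\<forall>i<length g. c i = 0))"

definition Fq_indep :: "nat \<Rightarrow> 'a::{field,finite} set \<Rightarrow> bool" where
  "Fq_indep q B \<longleftrightarrow>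
     (\<forall>c::'a \<Rightarrow> 'a. (\<forall>x\<in>B. c x \<in> Fq q) \<longrightarrow>
        (\<Sum>x\<in>B. c x * x) = 0 \<longrightarrow> (\<forall>x\<in>B. c x = 0))"

definition Fq_span :: "nat \<Rightarrow> 'a::{field,finite} set \<Rightarrow> 'a set" where
  "Fq_span q S = {(\<Sum>x\<in>T. c x * x) | T c. T \<subseteq> S \<and> (\<forall>x\<in>T. c x \<in> Fq q)}"

definition Fq_subspace :: "nat \<Rightarrow> 'a::{field,finite} set \<Rightarrow> bool" where
  "Fq_subspace q H \<longleftrightarrow> 0 \<in> H \<and> (\<forall>x\<in>H. \<forall>y\<in>H. x + y \<in> H)
     \<and> (\<forall>c\<in>Fq q. \<forall>x\<in>H. c * x \<in> H)"

definition Fq_dim :: "nat \<Rightarrow> 'a::{field,finite} set \<Rightarrow> nat" where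
  "Fq_dim q H = Max {card B | B. B \<subseteq> H \<and> Fq_indep q B}"

definition lin_poly :: "nat \<Rightarrow> 'a::{field,finite} poly \<Rightarrow> bool" where
  "lin_poly q L \<longleftrightarrow> (\<forall>i. coeff L i \<noteq> 0 \<longrightarrow> (\<exists>j. i = q ^ j))"

(* q-degree: the d with degree L = q^d (meaningful for nonzero linearized L) *)
definition qdeg :: "nat \<Rightarrow> 'a::{field,finite} poly \<Rightarrow> nat" where
  "qdeg q L = (THE d. degree L = q ^ d)"

definition rank_weight :: "nat \<Rightarrow> 'a::{field,finite} list \<Rightarrow> nat" where
  "rank_weight q u = Fq_dim q (Fq_span q (set u))"

definition rank_dist :: "nat \<Rightarrow> 'a::{field,finite} list \<Rightarrow> 'a list \<Rightarrow> nat" where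
  "rank_dist q u v = rank_weight q (map2 (-) u v)"

definition rank_dist_set :: "nat \<Rightarrow> 'a::{field,finite} list \<Rightarrow> 'a list set \<Rightarrow> nat" where
  "rank_dist_set q u C = Min {rank_dist q u c | c. c \<in> C}"

definition gabidulin :: "nat \<Rightarrow> nat \<Rightarrow> 'a::{field,finite} list \<Rightarrow> 'a list set" where
  "gabidulin q k g = {map (poly v) g | v. lin_poly q v \<and> (v = 0 \<or> qdeg q v < k)}"

end

theory Submission
  imports Defs "HOL-Number_Theory.Residues"
begin

text \<open>
  For a \<open>q\<close>-linearized \<open>L\<close> the evaluation \<open>x \<mapsto> L(x)\<close> is \<open>\<bbbF>\<^sub>q\<close>-linear, so on
  \<open>V = \<langle>g\<^sub>1, \<dots>, g\<^sub>n\<rangle>\<close> counting fibres gives \<open>q\<^sup>n = |ker L \<inter> V| \<cdot> q\<^bsup>w\<^sub>R(L(g))\<^esup>\<close>.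
  For a codeword \<open>v(g)\<close> we have \<open>deg\<^sub>q v < k \<le> deg\<^sub>q f\<close>, so \<open>f - v\<close> has the \<open>q\<close>-degree
  \<open>r\<close> and leading coefficient of \<open>f\<close>; its kernel has at most \<open>q\<^sup>r\<close> elements, whence
  \<open>d\<^sub>R(\<sigma>\<^sub>f, v(g)) \<ge> n - r\<close>. Equality means the kernel in \<open>V\<close> has exactly
  \<open>q\<^sup>r = deg (f - v)\<close> elements, so the monic \<open>f - v\<close> is the product of \<open>x - h\<close> over that
  kernel; conversely, such a product vanishes on its \<open>q\<^sup>r\<close> roots \<open>H \<subseteq> V\<close>.
\<close>

lemma card_eq_card_kernel_mult_card_image:
  fixes \<phi> :: "'a::ab_group_add \<Rightarrow> 'b::ab_group_add"
  assumes V0: "0 \<in> V" and V_diff: "\<And>x y. x \<in> V \<Longrightarrow> y \<in> V \<Longrightarrow> x - y \<in> V"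
    and hom: "\<And>x y. \<phi> (x - y) = \<phi> x - \<phi> y"
  shows "card V = card {x\<in>V. \<phi> x = 0} * card (\<phi> ` V)"
proof -
  define K where "K = {x\<in>V. \<phi> x = 0}"
  define r where "r = (\<lambda>b. SOME a. a \<in> V \<and> \<phi> a = b)"
  have r: "r b \<in> V \<and> \<phi> (r b) = b" if "b \<in> \<phi> ` V" for b
    unfolding r_def by (rule someI_ex) (use that in auto)
  have V_add: "x + y \<in> V" if "x \<in> V" "y \<in> V" for x y
    using V_diff[of x "0 - y"] V_diff[of 0 y] V0 that by simp
  have \<phi>_add: "\<phi> (x + y) = \<phi> x + \<phi> y" for x y
    using hom[of x "0 - y"] hom[of 0 y] hom[of 0 0] by simp
  have "bij_betw (\<lambda>a. (a - r (\<phi> a), \<phi> a)) V (K \<times> \<phi> ` V)"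
  proof (rule bij_betw_byWitness[where f' = "\<lambda>(k, b). k + r b"])
    show "(\<lambda>a. (a - r (\<phi> a), \<phi> a)) ` V \<subseteq> K \<times> \<phi> ` V"
      using r V_diff hom unfolding K_def by auto
    show "(\<lambda>(k, b). k + r b) ` (K \<times> \<phi> ` V) \<subseteq> V"
      using r V_add unfolding K_def by auto
    show "\<forall>z\<in>K \<times> \<phi> ` V. (\<lambda>a. (a - r (\<phi> a), \<phi> a)) ((\<lambda>(k, b). k + r b) z) = z"
      using r \<phi>_add unfolding K_def by auto
  qed simp
  then have "card V = card (K \<times> \<phi> ` V)"
    by (rule bij_betw_same_card)
  then show ?thesis
    unfolding K_def by (simp add: card_cartesian_product)
qed

lemma field_power_card_UNIV:
  fixes x :: "'a::{field,finite}"
  shows "x ^ card (UNIV :: 'a set) = x"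
proof (cases "x = 0")
  case False
  define G :: "'a monoid" where "G = \<lparr>carrier = UNIV - {0}, monoid.mult = (*), one = 1\<rparr>"
  interpret group G
    by (rule groupI) (auto simp: G_def intro!: bexI[of _ "inverse _"])
  have pow: "x [^]\<^bsub>G\<^esub> n = x ^ n" for n :: nat
    by (induction n) (simp_all add: G_def)
  have "Coset.order G = card (UNIV :: 'a set) - 1"
    unfolding Coset.order_def G_def
    by (simp only: partial_object.select_convs) (rule card_Diff_singleton, simp)
  moreover have "x \<in> carrier G"
    using False unfolding G_def by simp
  ultimately have "x ^ (card (UNIV :: 'a set) - 1) = 1"
    using pow_order_eq_1[of x] unfolding pow by (simp add: G_def)
  moreover have "card (UNIV :: 'a set) = Suc (card (UNIV :: 'a set) - 1)"
    using finite_UNIV_card_ge_0[where ?'a = 'a] by simp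
  ultimately show ?thesis
    by (metis mult_1 power_Suc2)
qed (simp add: finite_UNIV_card_ge_0)

lemma CHAR_eq_prime_of_card:
  fixes p :: nat
  assumes p: "prime p" and card: "card (UNIV :: 'a::{field,finite} set) = p ^ d"
  shows "CHAR('a) = p"
proof -
  have "prime CHAR('a)"
    by (intro prime_CHAR_semidom finite_imp_CHAR_pos) simp
  moreover have "CHAR('a) dvd p ^ d"
    using CHAR_dvd_CARD[where ?'a = 'a] card by simp
  ultimately show ?thesis
    using p by (metis prime_dvd_power primes_dvd_imp_eq)
qed

lemma monic_eq_prod_linear_factors:
  fixes L :: "'a::field poly"
  assumes H: "finite H" and monic: "lead_coeff L = 1" and deg: "degree L = card H"
    and roots: "\<And>h. h \<in> H \<Longrightarrow> poly L h = 0"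
  shows "L = (\<Prod>h\<in>H. [:- h, 1:])"
proof (rule ccontr)
  define P where "P = (\<Prod>h\<in>H. [:- h, 1:])"
  define D where "D = L - P"
  assume "L \<noteq> (\<Prod>h\<in>H. [:- h, 1:])"
  then have D0: "D \<noteq> 0"
    unfolding D_def P_def by simp
  have P_monic: "lead_coeff P = 1"
    unfolding P_def lead_coeff_prod by simp
  have P_deg: "degree P = card H"
    unfolding P_def by (simp add: degree_prod_eq_sum_degree)
  have "poly.coeff D (card H) = 0" "degree D \<le> card H"
    using P_monic P_deg monic deg unfolding D_def by (auto intro: degree_diff_le)
  then have "degree D < card H"
    using D0 by (metis le_neq_implies_less leading_coeff_0_iff)
  have "H \<subseteq> {x. poly D x = 0}"
    using roots H unfolding D_def P_def by (auto simp: poly_prod)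
  then have "card H \<le> card {x. poly D x = 0}"
    by (intro card_mono poly_roots_finite D0)
  also have "\<dots> \<le> degree D"
    by (rule card_poly_roots_bound[OF D0])
  finally show False
    using \<open>degree D < card H\<close> by simp
qed

lemma rank_dist_map_poly:
  "rank_dist q (map (poly f) g) (map (poly v) g) = rank_weight q (map (poly (f - v)) g)"
proof -
  have "map2 (-) (map (poly f) g) (map (poly v) g) = map (poly (f - v)) g"
    by (induction g) auto
  then show ?thesis
    unfolding rank_dist_def by simp
qed

lemma finite_gabidulin: "finite (gabidulin q k g)"
proof (rule finite_subset)
  show "gabidulin q k g \<subseteq> {xs. set xs \<subseteq> UNIV \<and> length xs = length g}"
    unfolding gabidulin_def by auto
qed (rule finite_lists_length_eq, simp)

lemma gabidulin_nonempty: "gabidulin q k g \<noteq> {}"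
proof -
  have "lin_poly q 0"
    unfolding lin_poly_def by simp
  then have "map (poly 0) g \<in> gabidulin q k g"
    unfolding gabidulin_def by blast
  then show ?thesis
    by blast
qed

lemma rank_dist_set_attained:
  assumes "finite C" "C \<noteq> {}"
  obtains c where "c \<in> C" "rank_dist_set q u C = rank_dist q u c"
proof -
  have "rank_dist_set q u C \<in> (rank_dist q u) ` C"
    unfolding rank_dist_set_def Setcompr_eq_image using assms by (intro Min_in) auto
  then show ?thesis
    using that by blast
qed

lemma rank_dist_set_le:
  assumes "finite C" "c \<in> C"
  shows "rank_dist_set q u C \<le> rank_dist q u c"
  unfolding rank_dist_set_def Setcompr_eq_image using assms by (intro Min_le) auto

lemma rank_dist_set_greatest:
  assumes "finite C" "C \<noteq> {}" "\<And>c. c \<in> C \<Longrightarrow> d \<le> rank_dist q u c"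
  shows "d \<le> rank_dist_set q u C"
  unfolding rank_dist_set_def Setcompr_eq_image using assms by (intro Min.boundedI) auto

section \<open>The subfield \<open>\<bbbF>\<^sub>q\<close> and \<open>q\<close>-linearized polynomials\<close>

context
  fixes q e :: nat
  assumes prime_CHAR: "prime CHAR('a::{field,finite})" and q_eq: "q = CHAR('a) ^ e"
    and e_pos: "e \<ge> 1"
begin

lemma q_ge_2: "q \<ge> 2"
proof -
  have "(2::nat) ^ 1 \<le> 2 ^ e"
    using e_pos by (intro power_increasing) auto
  also have "\<dots> \<le> CHAR('a) ^ e"
    using prime_CHAR prime_ge_2_nat by (intro power_mono) auto
  finally show ?thesis
    using q_eq by simp
qed

lemma add_power_q_power: "((x::'a) + y) ^ (q ^ j) = x ^ (q ^ j) + y ^ (q ^ j)"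
proof -
  have "q ^ j = CHAR('a) ^ (e * j)"
    using q_eq by (simp add: power_mult)
  then show ?thesis
    using freshmans_dream'[OF prime_CHAR] by blast
qed

lemma diff_power_q_power: "((x::'a) - y) ^ (q ^ j) = x ^ (q ^ j) - y ^ (q ^ j)"
  using add_power_q_power[of "x - y" y j] by (simp add: algebra_simps)

lemma Fq_power_q_power: "(c::'a) \<in> Fq q \<Longrightarrow> c ^ (q ^ j) = c"
proof (induction j)
  case (Suc j)
  have "c ^ (q ^ Suc j) = (c ^ q) ^ (q ^ j)"
    by (simp add: power_mult mult.commute)
  then show ?case
    using Suc by (simp add: Fq_def)
qed simp

lemma Fq_zero: "0 \<in> (Fq q :: 'a set)"
  using q_ge_2 by (simp add: Fq_def)

lemma Fq_one: "1 \<in> (Fq q :: 'a set)"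
  by (simp add: Fq_def)

lemma Fq_add: "(x::'a) \<in> Fq q \<Longrightarrow> y \<in> Fq q \<Longrightarrow> x + y \<in> Fq q"
  using add_power_q_power[of x y 1] by (simp add: Fq_def)

lemma Fq_diff: "(x::'a) \<in> Fq q \<Longrightarrow> y \<in> Fq q \<Longrightarrow> x - y \<in> Fq q"
  using diff_power_q_power[of x y 1] by (simp add: Fq_def)

lemma Fq_uminus: "(x::'a) \<in> Fq q \<Longrightarrow> - x \<in> Fq q"
  using Fq_diff[OF Fq_zero, of x] by simp

lemma Fq_mult: "(x::'a) \<in> Fq q \<Longrightarrow> y \<in> Fq q \<Longrightarrow> x * y \<in> Fq q"
  by (simp add: Fq_def power_mult_distrib)

lemma Fq_divide: "(x::'a) \<in> Fq q \<Longrightarrow> y \<in> Fq q \<Longrightarrow> x / y \<in> Fq q"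
  by (simp add: Fq_def power_divide)

lemma card_Fq_ge_2: "card (Fq q :: 'a set) \<ge> 2"
proof -
  have "card {0::'a, 1} \<le> card (Fq q :: 'a set)"
    using Fq_zero Fq_one by (intro card_mono) auto
  then show ?thesis
    by simp
qed

lemma card_Fq_le: "card (Fq q :: 'a set) \<le> q"
proof -
  define P where "P = Polynomial.monom (1::'a) q - Polynomial.monom 1 1"
  have "poly.coeff P q = 1"
    using q_ge_2 by (simp add: P_def coeff_monom)
  then have P0: "P \<noteq> 0"
    by auto
  have "degree P \<le> q"
    unfolding P_def using q_ge_2 by (intro degree_diff_le) (auto intro: order.trans[OF degree_monom_le])
  moreover have "Fq q = {x. poly P x = 0}"
    by (auto simp: Fq_def P_def poly_monom)
  ultimately show ?thesis
    using card_poly_roots_bound[OF P0] by simp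
qed

text \<open>
  The image of the additive map \<open>x \<mapsto> x\<^sup>q - x\<close> consists of roots of the trace polynomial
  \<open>\<Sum>\<^sub>i<\<^sub>m x\<^bsup>q\<^sup>i\<^esup>\<close>, since the sum telescopes to \<open>x\<^bsup>q\<^sup>m\<^esup> - x = 0\<close>.
\<close>
lemma card_range_power_q_minus_le:
  assumes card: "card (UNIV::'a set) = q ^ m" and m: "m \<ge> 1"
  shows "card (range (\<lambda>x::'a. x ^ q - x)) \<le> q ^ (m - 1)"
proof -
  define T where "T = (\<Sum>i<m. Polynomial.monom (1::'a) (q ^ i))"
  have "poly.coeff T (q ^ (m - 1)) = (\<Sum>i<m. if i = m - 1 then 1 else 0)"
    unfolding T_def coeff_sum coeff_monom using q_ge_2 by (intro sum.cong) (auto simp: power_inject_exp)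
  then have T0: "T \<noteq> 0"
    using m by (auto simp: sum.delta)
  have "degree T \<le> q ^ (m - 1)"
    unfolding T_def using q_ge_2
    by (intro degree_sum_le) (auto intro: order.trans[OF degree_monom_le] power_increasing)
  have "range (\<lambda>x::'a. x ^ q - x) \<subseteq> {y. poly T y = 0}"
  proof clarify
    fix x :: 'a
    have "poly T (x ^ q - x) = (\<Sum>i<m. x ^ (q ^ Suc i) - x ^ (q ^ i))"
      unfolding T_def poly_sum poly_monom diff_power_q_power
      by (intro sum.cong refl) (simp add: power_mult[symmetric])
    also have "\<dots> = x ^ (q ^ m) - x"
      using sum_lessThan_telescope[of "\<lambda>i. x ^ (q ^ i)" m] by simp
    finally show "poly T (x ^ q - x) = 0"
      using field_power_card_UNIV[of x] card by simp
  qed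
  then have "card (range (\<lambda>x::'a. x ^ q - x)) \<le> card {y. poly T y = 0}"
    by (rule card_mono[OF poly_roots_finite[OF T0]])
  also have "\<dots> \<le> degree T"
    by (rule card_poly_roots_bound[OF T0])
  finally show ?thesis
    using \<open>degree T \<le> q ^ (m - 1)\<close> by simp
qed

lemma card_Fq_eq:
  assumes card: "card (UNIV::'a set) = q ^ m" and m: "m \<ge> 1"
  shows "card (Fq q :: 'a set) = q"
proof -
  have "card (UNIV::'a set) = card {x\<in>UNIV::'a set. x ^ q - x = 0} * card (range (\<lambda>x::'a. x ^ q - x))"
    by (rule card_eq_card_kernel_mult_card_image)
      (use diff_power_q_power[of _ _ 1] in \<open>auto simp: algebra_simps\<close>)
  also have "{x\<in>UNIV::'a set. x ^ q - x = 0} = Fq q"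
    by (auto simp: Fq_def)
  also have "card (Fq q :: 'a set) * card (range (\<lambda>x::'a. x ^ q - x)) \<le> card (Fq q :: 'a set) * q ^ (m - 1)"
    using card_range_power_q_minus_le[OF card m] by simp
  finally have "q * q ^ (m - 1) \<le> card (Fq q :: 'a set) * q ^ (m - 1)"
    using card m by (simp add: power_eq_if)
  then show ?thesis
    using card_Fq_le q_ge_2 by (simp add: le_antisym)
qed

lemma lin_poly_add_arg: "lin_poly q L \<Longrightarrow> poly L ((x::'a) + y) = poly L x + poly L y"
proof -
  assume L: "lin_poly q L"
  have "poly.coeff L i * (x + y) ^ i = poly.coeff L i * x ^ i + poly.coeff L i * y ^ i" for i
  proof (cases "poly.coeff L i = 0")
    case False
    then obtain j where "i = q ^ j"
      using L unfolding lin_poly_def by blast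
    then show ?thesis
      by (simp add: add_power_q_power distrib_left)
  qed simp
  then show ?thesis
    unfolding poly_altdef by (simp add: sum.distrib)
qed

lemma lin_poly_mult_Fq_arg: "lin_poly q L \<Longrightarrow> c \<in> Fq q \<Longrightarrow> poly L (c * (x::'a)) = c * poly L x"
proof -
  assume L: "lin_poly q L" and c: "c \<in> Fq q"
  have monomial: "poly.coeff L i * (c * x) ^ i = c * (poly.coeff L i * x ^ i)" for i
  proof (cases "poly.coeff L i = 0")
    case False
    then obtain j where "i = q ^ j"
      using L unfolding lin_poly_def by blast
    then show ?thesis
      using Fq_power_q_power[OF c] by (simp add: power_mult_distrib)
  qed simp
  then show ?thesis
    unfolding poly_altdef sum_distrib_left by (intro sum.cong refl monomial)
qed

lemma lin_poly_diff_arg: "lin_poly q L \<Longrightarrow> poly L ((x::'a) - y) = poly L x - poly L y"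
  using lin_poly_add_arg[of L "x - y" y] by (simp add: algebra_simps)

lemma lin_poly_zero_arg: "lin_poly q L \<Longrightarrow> poly L (0::'a) = 0"
  using lin_poly_diff_arg[of L 0 0] by simp

lemma lin_poly_sum_arg:
  "lin_poly q L \<Longrightarrow> (\<forall>x\<in>T. c x \<in> Fq q) \<Longrightarrow>
     poly L (\<Sum>x\<in>T. c x * (h x::'a)) = (\<Sum>x\<in>T. c x * poly L (h x))"
  by (induction T rule: infinite_finite_induct)
    (simp_all add: lin_poly_zero_arg lin_poly_add_arg lin_poly_mult_Fq_arg)

lemma degree_eq_q_power_qdeg:
  assumes L: "lin_poly q L" and L0: "L \<noteq> (0::'a poly)"
  shows "degree L = q ^ qdeg q L"
proof -
  obtain j where j: "degree L = q ^ j"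
    using L L0 unfolding lin_poly_def by (meson leading_coeff_0_iff)
  moreover have "d = j" if "degree L = q ^ d" for d
    using that j q_ge_2 by (simp add: power_inject_exp)
  ultimately have "degree L = q ^ (THE d. degree L = q ^ d)"
    by (rule theI)
  then show ?thesis
    unfolding qdeg_def .
qed

section \<open>\<open>\<bbbF>\<^sub>q\<close>-subspaces\<close>

lemma Fq_span_eq_sums: "Fq_span q (S::'a set) = {(\<Sum>x\<in>S. c x * x) | c. \<forall>x\<in>S. c x \<in> Fq q}"
proof (intro equalityI subsetI)
  fix z assume "z \<in> Fq_span q S"
  then obtain T c where T: "T \<subseteq> S" "\<forall>x\<in>T. c x \<in> Fq q" and z: "z = (\<Sum>x\<in>T. c x * x)"
    unfolding Fq_span_def by blast
  define c' where "c' = (\<lambda>x. if x \<in> T then c x else 0)"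
  have "z = (\<Sum>x\<in>S. c' x * x)"
    unfolding z c'_def using T(1) by (intro sum.mono_neutral_cong_left) auto
  moreover have "\<forall>x\<in>S. c' x \<in> Fq q"
    using T(2) Fq_zero unfolding c'_def by auto
  ultimately show "z \<in> {(\<Sum>x\<in>S. c x * x) | c. \<forall>x\<in>S. c x \<in> Fq q}"
    by blast
qed (auto simp: Fq_span_def)

lemma Fq_subspace_sum: "Fq_subspace q (W::'a set) \<Longrightarrow> (\<forall>x\<in>T. f x \<in> W) \<Longrightarrow> sum f T \<in> W"
  by (induction T rule: infinite_finite_induct) (auto simp: Fq_subspace_def)

lemma Fq_subspace_mult: "Fq_subspace q (W::'a set) \<Longrightarrow> c \<in> Fq q \<Longrightarrow> x \<in> W \<Longrightarrow> c * x \<in> W"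
  by (auto simp: Fq_subspace_def)

lemma Fq_subspace_diff: "Fq_subspace q (W::'a set) \<Longrightarrow> x \<in> W \<Longrightarrow> y \<in> W \<Longrightarrow> x - y \<in> W"
  using Fq_subspace_mult[of W "- 1" y] Fq_uminus[OF Fq_one]
  by (auto simp: Fq_subspace_def simp flip: diff_conv_add_uminus)

lemma Fq_subspace_span: "Fq_subspace q (Fq_span q (S::'a set))"
  unfolding Fq_subspace_def Fq_span_eq_sums
proof (intro conjI ballI)
  show "0 \<in> {(\<Sum>x\<in>S. c x * x) | c. \<forall>x\<in>S. c x \<in> Fq q}"
    using Fq_zero by (intro CollectI exI[of _ "\<lambda>_. 0"]) auto
next
  fix a b assume "a \<in> {(\<Sum>x\<in>S. c x * x) | c. \<forall>x\<in>S. c x \<in> Fq q}"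
    "b \<in> {(\<Sum>x\<in>S. c x * x) | c. \<forall>x\<in>S. c x \<in> Fq q}"
  then obtain c1 c2 where "\<forall>x\<in>S. c1 x \<in> Fq q" "\<forall>x\<in>S. c2 x \<in> Fq q"
    and "a = (\<Sum>x\<in>S. c1 x * x)" "b = (\<Sum>x\<in>S. c2 x * x)"
    by blast
  then show "a + b \<in> {(\<Sum>x\<in>S. c x * x) | c. \<forall>x\<in>S. c x \<in> Fq q}"
    using Fq_add by (intro CollectI exI[of _ "\<lambda>x. c1 x + c2 x"]) (auto simp: sum.distrib distrib_right)
next
  fix d a :: 'a assume d: "d \<in> Fq q" and "a \<in> {(\<Sum>x\<in>S. c x * x) | c. \<forall>x\<in>S. c x \<in> Fq q}"
  then obtain c where "\<forall>x\<in>S. c x \<in> Fq q" and "a = (\<Sum>x\<in>S. c x * x)"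
    by blast
  then show "d * a \<in> {(\<Sum>x\<in>S. c x * x) | c. \<forall>x\<in>S. c x \<in> Fq q}"
    using d Fq_mult by (intro CollectI exI[of _ "\<lambda>x. d * c x"]) (auto simp: sum_distrib_left mult.assoc)
qed

lemma Fq_span_superset: "(S::'a set) \<subseteq> Fq_span q S"
proof
  fix x assume x: "x \<in> S"
  show "x \<in> Fq_span q S"
    unfolding Fq_span_def using x Fq_one
    by (intro CollectI exI[of _ "{x}"] exI[of _ "\<lambda>_. 1"]) simp
qed

lemma Fq_span_minimal: "Fq_subspace q (W::'a set) \<Longrightarrow> B \<subseteq> W \<Longrightarrow> Fq_span q B \<subseteq> W"
  unfolding Fq_span_eq_sums by (auto intro!: Fq_subspace_sum Fq_subspace_mult)

lemma Fq_lin_indep_listD: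
  assumes indep: "Fq_lin_indep_list q (g::'a list)"
  shows "distinct g" and "Fq_indep q (set g)"
proof -
  show dist: "distinct g"
    unfolding distinct_conv_nth
  proof (intro allI impI)
    fix i j assume i: "i < length g" and j: "j < length g" and "i \<noteq> j"
    define c where "c = (\<lambda>l. if l = i then 1 else if l = j then -1 else 0::'a)"
    have c_Fq: "\<forall>l<length g. c l \<in> Fq q"
      unfolding c_def using Fq_zero Fq_one Fq_uminus[OF Fq_one] by auto
    have "c l * g ! l = (if l = i then g ! i else 0) - (if l = j then g ! j else 0)" for l
      unfolding c_def using \<open>i \<noteq> j\<close> by auto
    then have "(\<Sum>l<length g. c l * g ! l) = g ! i - g ! j"
      using i j by (simp add: sum_subtractf)
    moreover have "c i \<noteq> 0"
      unfolding c_def by simp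
    ultimately show "g ! i \<noteq> g ! j"
      using indep i c_Fq unfolding Fq_lin_indep_list_def by fastforce
  qed
  show "Fq_indep q (set g)"
    unfolding Fq_indep_def
  proof (intro allI impI)
    fix c :: "'a \<Rightarrow> 'a" assume c: "\<forall>x\<in>set g. c x \<in> Fq q" and "(\<Sum>x\<in>set g. c x * x) = 0"
    moreover have "(\<Sum>l<length g. c (g ! l) * g ! l) = (\<Sum>x\<in>set g. c x * x)"
      by (rule sum.reindex_bij_betw[OF bij_betw_nth[OF dist refl refl]])
    moreover have "\<forall>l<length g. c (g ! l) \<in> Fq q"
      using c by simp
    ultimately have "\<forall>l<length g. c (g ! l) = 0"
      using indep[unfolded Fq_lin_indep_list_def, rule_format, of "\<lambda>l. c (g ! l)"] by metis
    then show "\<forall>x\<in>set g. c x = 0"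
      by (auto simp: in_set_conv_nth)
  qed
qed

lemma card_Fq_span_Fq_indep:
  assumes indep: "Fq_indep q (B::'a set)"
  shows "card (Fq_span q B) = card (Fq q :: 'a set) ^ card B"
proof -
  define F where "F = (\<lambda>c. \<Sum>x\<in>B. c x * x)"
  have span: "Fq_span q B = F ` (B \<rightarrow>\<^sub>E Fq q)"
  proof (intro equalityI subsetI)
    fix z assume "z \<in> Fq_span q B"
    then obtain c where c: "\<forall>x\<in>B. c x \<in> Fq q" and z: "z = F c"
      unfolding Fq_span_eq_sums F_def by blast
    have "F (restrict c B) = F c"
      unfolding F_def by (intro sum.cong) auto
    then show "z \<in> F ` (B \<rightarrow>\<^sub>E Fq q)"
      using c z by (intro image_eqI[of _ _ "restrict c B"]) auto
  qed (auto simp: Fq_span_eq_sums F_def)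
  have "inj_on F (B \<rightarrow>\<^sub>E Fq q)"
  proof (rule inj_onI)
    fix c1 c2 assume c1: "c1 \<in> B \<rightarrow>\<^sub>E Fq q" and c2: "c2 \<in> B \<rightarrow>\<^sub>E Fq q" and "F c1 = F c2"
    then have "(\<Sum>x\<in>B. (c1 x - c2 x) * x) = 0"
      unfolding F_def by (simp add: sum_subtractf left_diff_distrib)
    moreover have "\<forall>x\<in>B. c1 x - c2 x \<in> Fq q"
      using c1 c2 Fq_diff by auto
    ultimately have "\<forall>x\<in>B. c1 x - c2 x = 0"
      using indep[unfolded Fq_indep_def, rule_format, of "\<lambda>x. c1 x - c2 x"] by blast
    then show "c1 = c2"
      using c1 c2 by (intro PiE_ext) auto
  qed
  then have "card (Fq_span q B) = card (B \<rightarrow>\<^sub>E (Fq q :: 'a set))"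
    unfolding span by (rule card_image)
  then show ?thesis
    by (simp add: card_PiE)
qed

lemma Fq_indep_insert:
  assumes indep: "Fq_indep q (B::'a set)" and x: "x \<notin> Fq_span q B"
  shows "Fq_indep q (insert x B)"
  unfolding Fq_indep_def
proof (intro allI impI)
  fix c assume c: "\<forall>y\<in>insert x B. c y \<in> Fq q" and "(\<Sum>y\<in>insert x B. c y * y) = 0"
  moreover have "x \<notin> B"
    using x Fq_span_superset by blast
  ultimately have sum0: "c x * x + (\<Sum>y\<in>B. c y * y) = 0"
    by simp
  have "c x = 0"
  proof (rule ccontr)
    assume cx: "c x \<noteq> 0"
    have "(\<Sum>y\<in>B. (- c y / c x) * y) = - (\<Sum>y\<in>B. c y * y) / c x"
      by (simp add: sum_divide_distrib sum_negf)
    also have "\<dots> = (c x * x) / c x"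
      using sum0 by (simp add: add_eq_0_iff2)
    also have "\<dots> = x"
      using cx by simp
    finally have "x = (\<Sum>y\<in>B. (- c y / c x) * y)"
      by simp
    moreover have "\<forall>y\<in>B. - c y / c x \<in> Fq q"
      using c by (auto intro!: Fq_divide Fq_uminus)
    ultimately have "x \<in> Fq_span q B"
      unfolding Fq_span_eq_sums by (intro CollectI exI[of _ "\<lambda>y. - c y / c x"]) simp
    then show False
      using x by blast
  qed
  then have "\<forall>y\<in>B. c y = 0"
    using indep c sum0 unfolding Fq_indep_def by simp
  then show "\<forall>y\<in>insert x B. c y = 0"
    using \<open>c x = 0\<close> by blast
qed

lemma Fq_subspace_has_basis:
  assumes W: "Fq_subspace q (W::'a set)"
  obtains B where "B \<subseteq> W" "Fq_indep q B" "Fq_span q B = W"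
proof -
  define S where "S = card ` {B. B \<subseteq> W \<and> Fq_indep q B}"
  have "{} \<in> {B. B \<subseteq> W \<and> Fq_indep q B}"
    unfolding Fq_indep_def by simp
  then have "Max S \<in> S"
    unfolding S_def by (intro Max_in) auto
  then obtain B where B: "B \<subseteq> W" "Fq_indep q B" "card B = Max S"
    unfolding S_def by auto
  have "W \<subseteq> Fq_span q B"
  proof
    fix x assume "x \<in> W"
    show "x \<in> Fq_span q B"
    proof (rule ccontr)
      assume x: "x \<notin> Fq_span q B"
      then have "card (insert x B) \<in> S"
        unfolding S_def using Fq_indep_insert[OF B(2)] B(1) \<open>x \<in> W\<close> by auto
      then have "card (insert x B) \<le> card B"
        unfolding B(3) by (simp add: S_def)
      moreover have "x \<notin> B"
        using x Fq_span_superset by blast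
      ultimately show False
        by simp
    qed
  qed
  then show ?thesis
    using that B Fq_span_minimal[OF W B(1)] by blast
qed

text \<open>Any independent \<open>B \<subseteq> W\<close> has \<open>|\<bbbF>\<^sub>q|\<^bsup>|B|\<^esup> \<le> |W|\<close> elements, so a basis has the maximal size.\<close>
lemma card_Fq_subspace:
  assumes W: "Fq_subspace q (W::'a set)"
  shows "card W = card (Fq q :: 'a set) ^ Fq_dim q W"
proof -
  obtain B0 where B0: "B0 \<subseteq> W" "Fq_indep q B0" "Fq_span q B0 = W"
    using Fq_subspace_has_basis[OF W] by blast
  have card_W: "card W = card (Fq q :: 'a set) ^ card B0"
    using card_Fq_span_Fq_indep[OF B0(2)] B0(3) by simp
  have "Fq_dim q W = card B0"
    unfolding Fq_dim_def
  proof (rule Max_eqI)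
    fix d assume "d \<in> {card B | B. B \<subseteq> W \<and> Fq_indep q B}"
    then obtain B where B: "B \<subseteq> W" "Fq_indep q B" "d = card B"
      by blast
    have "card (Fq q :: 'a set) ^ card B = card (Fq_span q B)"
      using card_Fq_span_Fq_indep[OF B(2)] by simp
    also have "\<dots> \<le> card W"
      using Fq_span_minimal[OF W B(1)] by (intro card_mono) auto
    finally show "d \<le> card B0"
      using card_W B(3) card_Fq_ge_2 by (simp add: power_le_imp_le_exp)
  qed (use B0 in auto)
  then show ?thesis
    using card_W by simp
qed

lemma Fq_subspace_image_lin_poly:
  assumes L: "lin_poly q L" and W: "Fq_subspace q (W::'a set)"
  shows "Fq_subspace q (poly L ` W)"
  unfolding Fq_subspace_def
proof (intro conjI ballI)
  show "0 \<in> poly L ` W"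
    using W lin_poly_zero_arg[OF L] unfolding Fq_subspace_def by force
next
  fix x y assume "x \<in> poly L ` W" "y \<in> poly L ` W"
  then obtain a b where "a \<in> W" "b \<in> W" "x = poly L a" "y = poly L b"
    by blast
  moreover have "a + b \<in> W"
    using W \<open>a \<in> W\<close> \<open>b \<in> W\<close> unfolding Fq_subspace_def by blast
  ultimately show "x + y \<in> poly L ` W"
    using lin_poly_add_arg[OF L] by (metis image_eqI)
next
  fix c x :: 'a assume c: "c \<in> Fq q" and "x \<in> poly L ` W"
  then obtain a where "a \<in> W" "x = poly L a"
    by blast
  moreover have "c * a \<in> W"
    using W c \<open>a \<in> W\<close> by (rule Fq_subspace_mult)
  ultimately show "c * x \<in> poly L ` W"
    using lin_poly_mult_Fq_arg[OF L c] by (metis image_eqI)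
qed

lemma Fq_subspace_kernel_lin_poly:
  assumes "lin_poly q L" and "Fq_subspace q (W::'a set)"
  shows "Fq_subspace q {x\<in>W. poly L x = 0}"
  using assms lin_poly_zero_arg lin_poly_add_arg lin_poly_mult_Fq_arg
  unfolding Fq_subspace_def by auto

lemma Fq_span_image_lin_poly:
  assumes L: "lin_poly q L"
  shows "Fq_span q (poly L ` (G::'a set)) = poly L ` Fq_span q G"
proof
  show "Fq_span q (poly L ` G) \<subseteq> poly L ` Fq_span q G"
    using Fq_span_superset[of G]
    by (intro Fq_span_minimal Fq_subspace_image_lin_poly[OF L Fq_subspace_span]) auto
next
  show "poly L ` Fq_span q G \<subseteq> Fq_span q (poly L ` G)"
  proof
    fix z assume "z \<in> poly L ` Fq_span q G"
    then obtain c where c: "\<forall>x\<in>G. c x \<in> Fq q" and z: "z = poly L (\<Sum>x\<in>G. c x * x)"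
      unfolding Fq_span_eq_sums by blast
    have "z = (\<Sum>x\<in>G. c x * poly L x)"
      unfolding z using lin_poly_sum_arg[OF L c, of "\<lambda>x. x"] by simp
    also have "\<dots> \<in> Fq_span q (poly L ` G)"
      using c Fq_span_superset[of "poly L ` G"]
      by (intro Fq_subspace_sum[OF Fq_subspace_span] ballI Fq_subspace_mult[OF Fq_subspace_span]) auto
    finally show "z \<in> Fq_span q (poly L ` G)" .
  qed
qed

section \<open>Rank distance to the Gabidulin code\<close>

lemma card_kernel_mult_rank_weight:
  fixes g :: "'a list"
  assumes card_Fq: "card (Fq q :: 'a set) = q" and g: "Fq_lin_indep_list q g" and L: "lin_poly q L"
  shows "q ^ length g = card {x\<in>Fq_span q (set g). poly L x = 0} * q ^ rank_weight q (map (poly L) g)"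
proof -
  define V where "V = Fq_span q (set g)"
  have V: "Fq_subspace q V"
    unfolding V_def by (rule Fq_subspace_span)
  have "card V = q ^ length g"
    unfolding V_def using card_Fq_span_Fq_indep Fq_lin_indep_listD[OF g] card_Fq
    by (simp add: distinct_card)
  moreover have "card V = card {x\<in>V. poly L x = 0} * card (poly L ` V)"
    using V lin_poly_diff_arg[OF L]
    by (intro card_eq_card_kernel_mult_card_image) (auto simp: Fq_subspace_def Fq_subspace_diff)
  moreover have "card (poly L ` V) = q ^ rank_weight q (map (poly L) g)"
    using card_Fq_subspace[OF Fq_subspace_image_lin_poly[OF L V]] card_Fq
    unfolding rank_weight_def V_def by (simp add: Fq_span_image_lin_poly[OF L])
  ultimately show ?thesis
    unfolding V_def by simp
qed

lemma length_le_qdeg_add_rank_weight: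
  fixes g :: "'a list"
  assumes card_Fq: "card (Fq q :: 'a set) = q" and g: "Fq_lin_indep_list q g"
    and L: "lin_poly q L" and L0: "L \<noteq> 0"
  shows "length g \<le> qdeg q L + rank_weight q (map (poly L) g)"
proof -
  have "card {x\<in>Fq_span q (set g). poly L x = 0} \<le> card {x. poly L x = 0}"
    by (rule card_mono[OF poly_roots_finite[OF L0]]) auto
  also have "\<dots> \<le> q ^ qdeg q L"
    using card_poly_roots_bound[OF L0] degree_eq_q_power_qdeg[OF L L0] by simp
  finally have "q ^ length g \<le> q ^ qdeg q L * q ^ rank_weight q (map (poly L) g)"
    unfolding card_kernel_mult_rank_weight[OF card_Fq g L] by simp
  then show ?thesis
    using q_ge_2 by (simp add: power_add[symmetric] power_le_imp_le_exp)
qed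

lemma rank_weight_eq_iff_prod_subspace:
  fixes g :: "'a list"
  assumes card_Fq: "card (Fq q :: 'a set) = q" and g: "Fq_lin_indep_list q g"
    and L: "lin_poly q L" and monic: "lead_coeff L = 1" and r: "qdeg q L \<le> length g"
  shows "rank_weight q (map (poly L) g) = length g - qdeg q L \<longleftrightarrow>
    (\<exists>H. Fq_subspace q H \<and> H \<subseteq> Fq_span q (set g) \<and> Fq_dim q H = qdeg q L
      \<and> L = (\<Prod>h\<in>H. [:- h, 1:]))"
    (is "?w = _ \<longleftrightarrow> _")
proof -
  define K where "K = {x\<in>Fq_span q (set g). poly L x = 0}"
  have L0: "L \<noteq> 0"
    using monic by auto
  have count: "q ^ length g = card K * q ^ ?w"
    unfolding K_def by (rule card_kernel_mult_rank_weight[OF card_Fq g L])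
  have K: "Fq_subspace q K"
    unfolding K_def by (rule Fq_subspace_kernel_lin_poly[OF L Fq_subspace_span])
  have deg: "degree L = q ^ qdeg q L"
    by (rule degree_eq_q_power_qdeg[OF L L0])
  show ?thesis
  proof
    assume "?w = length g - qdeg q L"
    then have "q ^ qdeg q L * q ^ ?w = card K * q ^ ?w"
      using count r by (simp flip: power_add)
    then have card_K: "card K = q ^ qdeg q L"
      using q_ge_2 by simp
    then have "Fq_dim q K = qdeg q L"
      using card_Fq_subspace[OF K] card_Fq q_ge_2 by (simp add: power_inject_exp)
    moreover have "L = (\<Prod>h\<in>K. [:- h, 1:])"
      using card_K deg monic by (intro monic_eq_prod_linear_factors) (auto simp: K_def)
    ultimately show "\<exists>H. Fq_subspace q H \<and> H \<subseteq> Fq_span q (set g) \<and> Fq_dim q H = qdeg q L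
      \<and> L = (\<Prod>h\<in>H. [:- h, 1:])"
      using K unfolding K_def by blast
  next
    assume "\<exists>H. Fq_subspace q H \<and> H \<subseteq> Fq_span q (set g) \<and> Fq_dim q H = qdeg q L
      \<and> L = (\<Prod>h\<in>H. [:- h, 1:])"
    then obtain H where H: "Fq_subspace q H" "H \<subseteq> Fq_span q (set g)" "Fq_dim q H = qdeg q L"
      and L_prod: "L = (\<Prod>h\<in>H. [:- h, 1:])"
      by blast
    have "H \<subseteq> K"
      using H(2) unfolding K_def by (subst L_prod) (auto simp: poly_prod)
    then have "q ^ qdeg q L \<le> card K"
      using card_Fq_subspace[OF H(1)] card_Fq H(3) by (metis card_mono finite)
    then have "q ^ qdeg q L * q ^ ?w \<le> q ^ length g"
      unfolding count by simp
    then have "?w \<le> length g - qdeg q L"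
      using q_ge_2 by (simp add: power_add[symmetric] power_le_imp_le_exp)
    then show "?w = length g - qdeg q L"
      using length_le_qdeg_add_rank_weight[OF card_Fq g L L0] by simp
  qed
qed

lemma lin_poly_diff_lower_qdeg:
  fixes f v :: "'a poly"
  assumes f: "lin_poly q f" "f \<noteq> 0" and v: "lin_poly q v" "v = 0 \<or> qdeg q v < qdeg q f"
  shows "lin_poly q (f - v)" and "qdeg q (f - v) = qdeg q f"
    and "lead_coeff (f - v) = lead_coeff f" and "f - v \<noteq> 0"
proof -
  show "lin_poly q (f - v)"
    using f(1) v(1) unfolding lin_poly_def by (metis coeff_diff diff_zero)
  have "degree v < degree f"
  proof (cases "v = 0")
    case False
    then have "q ^ qdeg q v < q ^ qdeg q f"
      using v(2) q_ge_2 by (intro power_strict_increasing) auto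
    then show ?thesis
      using degree_eq_q_power_qdeg[OF f] degree_eq_q_power_qdeg[OF v(1) False] by simp
  qed (use degree_eq_q_power_qdeg[OF f] q_ge_2 in simp)
  then have "degree (f + - v) = degree f"
    by (intro degree_add_eq_left) simp
  then have deg: "degree (f - v) = degree f"
    by simp
  then have lc: "lead_coeff (f - v) = lead_coeff f"
    using \<open>degree v < degree f\<close> by (simp add: coeff_eq_0)
  show "qdeg q (f - v) = qdeg q f"
    by (simp only: qdeg_def deg)
  show "lead_coeff (f - v) = lead_coeff f"
    by (fact lc)
  show "f - v \<noteq> 0"
    using lc f(2) by auto
qed

lemma rank_dist_set_gabidulin_ge:
  fixes g :: "'a list"
  assumes card_Fq: "card (Fq q :: 'a set) = q" and g: "Fq_lin_indep_list q g"
    and f: "lin_poly q f" "f \<noteq> 0" and k: "k \<le> qdeg q f"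
  shows "length g - qdeg q f \<le> rank_dist_set q (map (poly f) g) (gabidulin q k g)"
proof (rule rank_dist_set_greatest[OF finite_gabidulin gabidulin_nonempty])
  fix c assume "c \<in> gabidulin q k g"
  then obtain v where c: "c = map (poly v) g" and "lin_poly q v" "v = 0 \<or> qdeg q v < k"
    unfolding gabidulin_def by blast
  then have v: "lin_poly q v" "v = 0 \<or> qdeg q v < qdeg q f"
    using k by auto
  show "length g - qdeg q f \<le> rank_dist q (map (poly f) g) c"
    using length_le_qdeg_add_rank_weight[OF card_Fq g lin_poly_diff_lower_qdeg(1,4)[OF f v]]
    unfolding c rank_dist_map_poly lin_poly_diff_lower_qdeg(2)[OF f v] by simp
qed

lemma rank_weight_diff_eq_iff_prod_subspace:
  fixes g :: "'a list" and f v :: "'a poly"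
  assumes card_Fq: "card (Fq q :: 'a set) = q" and g: "Fq_lin_indep_list q g"
    and f: "lin_poly q f" and monic: "lead_coeff f = 1" and r: "qdeg q f \<le> length g"
    and v: "lin_poly q v" "v = 0 \<or> qdeg q v < qdeg q f"
  shows "rank_weight q (map (poly (f - v)) g) = length g - qdeg q f \<longleftrightarrow>
    (\<exists>H. Fq_subspace q H \<and> H \<subseteq> Fq_span q (set g) \<and> Fq_dim q H = qdeg q f
      \<and> f - v = (\<Prod>h\<in>H. [:- h, 1:]))"
proof -
  have f0: "f \<noteq> 0"
    using monic by auto
  show ?thesis
    using rank_weight_eq_iff_prod_subspace[OF card_Fq g lin_poly_diff_lower_qdeg(1)[OF f f0 v]] r monic
    unfolding lin_poly_diff_lower_qdeg(2,3)[OF f f0 v] by simp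
qed

lemma rank_dist_set_gabidulin_eq_iff:
  fixes g :: "'a list"
  assumes card_Fq: "card (Fq q :: 'a set) = q" and g: "Fq_lin_indep_list q g"
    and f: "lin_poly q f" and monic: "lead_coeff f = 1"
    and k: "1 \<le> k" "k \<le> qdeg q f" and r: "qdeg q f \<le> length g"
  shows "rank_dist_set q (map (poly f) g) (gabidulin q k g) = length g - qdeg q f \<longleftrightarrow>
    (\<exists>H v. Fq_subspace q H \<and> H \<subseteq> Fq_span q (set g) \<and> Fq_dim q H = qdeg q f
      \<and> lin_poly q v \<and> (v = 0 \<or> qdeg q v \<le> k - 1) \<and> f - v = (\<Prod>h\<in>H. [:- h, 1:]))"
    (is "?d = _ \<longleftrightarrow> _")
proof -
  have message: "c \<in> gabidulin q k g \<longleftrightarrow>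
      (\<exists>v. c = map (poly v) g \<and> lin_poly q v \<and> (v = 0 \<or> qdeg q v \<le> k - 1))" for c
    using k(1) unfolding gabidulin_def by auto
  have weight_eq_iff: "rank_weight q (map (poly (f - v)) g) = length g - qdeg q f \<longleftrightarrow>
      (\<exists>H. Fq_subspace q H \<and> H \<subseteq> Fq_span q (set g) \<and> Fq_dim q H = qdeg q f
        \<and> f - v = (\<Prod>h\<in>H. [:- h, 1:]))"
    if "lin_poly q v" "v = 0 \<or> qdeg q v \<le> k - 1" for v
    using that k by (intro rank_weight_diff_eq_iff_prod_subspace[OF card_Fq g f monic r]) auto
  show ?thesis
  proof
    assume attained: "?d = length g - qdeg q f"
    obtain c where "c \<in> gabidulin q k g" "?d = rank_dist q (map (poly f) g) c"
      by (rule rank_dist_set_attained[OF finite_gabidulin gabidulin_nonempty])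
    then obtain v where "lin_poly q v" "v = 0 \<or> qdeg q v \<le> k - 1"
      and "rank_weight q (map (poly (f - v)) g) = length g - qdeg q f"
      using attained unfolding message by (auto simp: rank_dist_map_poly)
    then show "\<exists>H v. Fq_subspace q H \<and> H \<subseteq> Fq_span q (set g) \<and> Fq_dim q H = qdeg q f
      \<and> lin_poly q v \<and> (v = 0 \<or> qdeg q v \<le> k - 1) \<and> f - v = (\<Prod>h\<in>H. [:- h, 1:])"
      using weight_eq_iff by blast
  next
    assume "\<exists>H v. Fq_subspace q H \<and> H \<subseteq> Fq_span q (set g) \<and> Fq_dim q H = qdeg q f
      \<and> lin_poly q v \<and> (v = 0 \<or> qdeg q v \<le> k - 1) \<and> f - v = (\<Prod>h\<in>H. [:- h, 1:])"
    then obtain v where v: "lin_poly q v" "v = 0 \<or> qdeg q v \<le> k - 1"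
      and weight: "rank_weight q (map (poly (f - v)) g) = length g - qdeg q f"
      using weight_eq_iff by blast
    have "map (poly v) g \<in> gabidulin q k g"
      using message v by blast
    then have "?d \<le> rank_dist q (map (poly f) g) (map (poly v) g)"
      by (rule rank_dist_set_le[OF finite_gabidulin])
    moreover have "length g - qdeg q f \<le> ?d"
      using monic by (intro rank_dist_set_gabidulin_ge[OF card_Fq g f _ k(2)]) auto
    ultimately show "?d = length g - qdeg q f"
      using weight unfolding rank_dist_map_poly by simp
  qed
qed

end

theorem theorem1:
  fixes q m k n :: nat and g :: "'a::{field,finite} list" and f :: "'a poly"
  assumes "\<exists>p e. prime p \<and> e \<ge> 1 \<and> q = p ^ e"
    and "card (UNIV :: 'a set) = q ^ m"
    and "1 \<le> k" "k \<le> n" "n \<le> m"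
    and "length g = n"
    and "Fq_lin_indep_list q g"
    and "lin_poly q f" "f \<noteq> 0"
    and "k \<le> qdeg q f" "qdeg q f < n"
  shows "rank_dist_set q (map (poly f) g) (gabidulin q k g) \<ge> n - qdeg q f
    \<and> (lead_coeff f = 1 \<longrightarrow>
        (rank_dist_set q (map (poly f) g) (gabidulin q k g) = n - qdeg q f \<longleftrightarrow>
          (\<exists>H v. Fq_subspace q H \<and> H \<subseteq> Fq_span q (set g) \<and> Fq_dim q H = qdeg q f
              \<and> lin_poly q v \<and> (v = 0 \<or> qdeg q v \<le> k - 1)
              \<and> f - v = (\<Prod>h\<in>H. [:- h, 1:]))))"
proof -
  obtain p e where p: "prime p" and e: "e \<ge> 1" and q: "q = p ^ e"
    using assms(1) by blast
  have "CHAR('a) = p"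
    using CHAR_eq_prime_of_card[OF p] assms(2) unfolding q by (simp flip: power_mult)
  then have char: "prime CHAR('a)" "q = CHAR('a) ^ e"
    using p q by simp_all
  have card_Fq: "card (Fq q :: 'a set) = q"
    using card_Fq_eq[OF char e assms(2)] assms(3-5) by simp
  show ?thesis
    using rank_dist_set_gabidulin_ge[OF char e card_Fq assms(7-10)]
      rank_dist_set_gabidulin_eq_iff[OF char e card_Fq assms(7,8) _ assms(3,10)] assms(6,11)
    by simp
qed

end
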